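(* Let $A\in(0,1)$ and let $\Omega_0$ be the bounded domain enclosed by the closed curve $\Gamma_0$ (see context). Then $\frac{2}{A}\operatorname{Re}\phi$ is the Green function of $\Omega_0$ with pole at $0$; that is, $\operatorname{Re}\phi$ is harmonic on $\Omega_0\setminus\{0\}$, has boundary values $0$ on $\Gamma_0$, and $\operatorname{Re}\phi(z)-\frac{A}{2}\log|z|$ stays bounded as $z\to0$ (up to the sign/normalization fixed by $\frac{2}{A}\operatorname{Re}\phi(z)= -\log|z|+O(1)$ corresponding to the positive Green function, with the sign convention that $\operatorname{Re}\phi>0$ in $\Omega_0$). Consequently, for every $r>0$, the level set $\{z\in\Omega_0:\operatorname{Re}\phi(z)=r/2\}$ is a simple closed curve encircling $0$.
   Context: Fix $A\in(0,1)$, $\beta_{1,2}=2-A\mp2\sqrt{1-A}$, $R(z)=(z-\beta_1)^{1/2}(z-\beta_2)^{1/2}$ on $\mathbb C\setminus[\beta_1,\beta_2]$ with $R(z)\sim z$ at $\infty$, and $\phi(z)=\frac12\int_{\beta_1}^z\frac{R(s)}{s}ds$ on $\mathbb C\setminus((-\infty,0]\cup[\beta_1,\infty))$ (path avoiding these cuts except at its start). $\operatorname{Re}\phi$ is well defined and harmonic on $\mathbb C\setminus(\{0\}\cup[\beta_1,\infty))$. $\Gamma_0$ denotes the simple closed curve through $\beta_1$ encircling $0$ consisting of the trajectory $\{\operatorname{Re}\phi=0\}$ that leaves $\beta_1$ at angle $-2\pi/3$ together with its mirror image in the real axis; it meets the real axis only at $\beta_1$ and at one negative point. *)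

theory Defs
  imports "HOL-Complex_Analysis.Complex_Analysis"
begin

definition beta1 :: "real \<Rightarrow> real" where
  "beta1 A = 2 - A - 2 * sqrt (1 - A)"
definition beta2 :: "real \<Rightarrow> real" where
  "beta2 A = 2 - A + 2 * sqrt (1 - A)"

text \<open>R(z) = (z-beta1)^(1/2) (z-beta2)^(1/2), principal square roots: analytic off
  [beta1,beta2] and R(z) ~ z at infinity.\<close>
definition Rfun :: "real \<Rightarrow> complex \<Rightarrow> complex" where
  "Rfun A z = csqrt (z - of_real (beta1 A)) * csqrt (z - of_real (beta2 A))"

definition cutset :: "real \<Rightarrow> complex set" where
  "cutset A = {z. Im z = 0 \<and> (Re z \<le> 0 \<or> Re z \<ge> beta1 A)}"

text \<open>phi(z) = 1/2 int_{beta1}^z R(s)/s ds on C minus the cuts; the straight segment from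
  beta1 to such z avoids the cuts except at its start.\<close>
definition phi :: "real \<Rightarrow> complex \<Rightarrow> complex" where
  "phi A z = contour_integral (linepath (of_real (beta1 A)) z) (\<lambda>s. Rfun A s / s) / 2"

text \<open>Re phi, extended continuously across the negative real axis (where it is well defined
  and harmonic, as stated in the context).\<close>
definition RePhi :: "real \<Rightarrow> complex \<Rightarrow> real" where
  "RePhi A z = (if z \<notin> cutset A then Re (phi A z)
               else Lim (at z within (- cutset A)) (\<lambda>w. Re (phi A w)))"

definition harmonic_on :: "complex set \<Rightarrow> (complex \<Rightarrow> real) \<Rightarrow> bool" where
  "harmonic_on S u \<longleftrightarrow> open S \<and>
     (\<exists>ux uy uxx uxy uyx uyy.
        continuous_on S uxx \<and> continuous_on S uxy \<and> continuous_on S uyx \<and> continuous_on S uyy \<and>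
        (\<forall>z\<in>S. (u has_derivative (\<lambda>h. Re h * ux z + Im h * uy z)) (at z) \<and>
                (ux has_derivative (\<lambda>h. Re h * uxx z + Im h * uxy z)) (at z) \<and>
                (uy has_derivative (\<lambda>h. Re h * uyx z + Im h * uyy z)) (at z) \<and>
                uxx z + uyy z = 0))"

definition is_Gamma0 :: "real \<Rightarrow> (real \<Rightarrow> complex) \<Rightarrow> bool" where
  "is_Gamma0 A g \<longleftrightarrow>
     simple_path g \<and> pathfinish g = pathstart g \<and> pathstart g = of_real (beta1 A) \<and>
     (\<forall>z\<in>path_image g - {of_real (beta1 A)}.
         z \<noteq> 0 \<and> \<not> (Im z = 0 \<and> Re z \<ge> beta1 A) \<and> RePhi A z = 0) \<and>
     ((\<lambda>t. (g t - of_real (beta1 A)) / of_real (cmod (g t - of_real (beta1 A))))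
        \<longlongrightarrow> cis (- 2 * pi / 3)) (at_right 0) \<and>
     cnj ` path_image g = path_image g"

end

theory Submission
  imports Defs
begin

text \<open>
  On the plane slit along \<open>[\<beta>\<^sub>1, \<infinity>)\<close>, \<open>Re \<phi>\<close> is up to an additive constant the function
  \<open>Ephi\<close>, the real part of the classical antiderivative
  \<open>(R - (2 - A) log N\<^sub>1 + A log N\<^sub>2 - A log z) / 2\<close> of \<open>R(z) / (2z)\<close>. This gives harmonicity and,
  the slit plane being simply connected, a zero-free holomorphic \<open>P\<close> with
  \<open>|z P(z)| = exp (-(2/A) Re \<phi>(z))\<close>. Since \<open>Re \<phi>\<close> vanishes on \<open>\<Gamma>\<^sub>0\<close>, \<open>F(z) = z P(z)\<close> has
  boundary modulus 1 on \<open>\<Omega>\<^sub>0\<close>. Hence \<open>0 \<in> \<Omega>\<^sub>0\<close> (otherwise F would be zero-free and unimodular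
  on \<open>\<Omega>\<^sub>0\<close>, hence constant, yet \<open>F(0) = 0\<close>), and for a Riemann map \<open>\<psi>\<close> of the disc onto
  \<open>\<Omega>\<^sub>0\<close> fixing 0 we get \<open>F (\<psi> u) = u Q(u)\<close> with \<open>|Q| = 1\<close>, by the maximum principle for
  \<open>Q\<close> and \<open>1/Q\<close>. So \<open>Re \<phi> (\<psi> u) = -(A/2) log |u|\<close>, which is positive and whose level sets
  are the images of circles under \<open>\<psi>\<close>.
\<close>

lemma has_field_derivative_imp_has_derivative_Re:
  assumes "(f has_field_derivative f') (at z)"
  shows "((\<lambda>w. Re (f w)) has_derivative (\<lambda>h. Re (h * f'))) (at z)"
  using has_derivative_Re[OF has_field_derivative_imp_has_derivative[OF assms]]
  by (simp add: mult.commute)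

lemma has_field_derivative_imp_has_derivative_Im:
  assumes "(f has_field_derivative f') (at z)"
  shows "((\<lambda>w. Im (f w)) has_derivative (\<lambda>h. Im (h * f'))) (at z)"
  using has_derivative_Im[OF has_field_derivative_imp_has_derivative[OF assms]]
  by (simp add: mult.commute)

lemma has_derivative_ln_norm:
  fixes N :: "complex \<Rightarrow> complex"
  assumes N: "(N has_field_derivative N') (at z)" and nz: "N z \<noteq> 0"
  shows "((\<lambda>w. ln (norm (N w))) has_derivative (\<lambda>h. Re (h * (N' / N z)))) (at z)"
proof -
  have "((\<lambda>w. Ln (N w / N z)) has_field_derivative N' / N z) (at z)"
    using nz by (auto intro!: derivative_eq_intros N)
  from has_derivative_add_const[OF has_field_derivative_imp_has_derivative_Re[OF this]]
  have D: "((\<lambda>w. Re (Ln (N w / N z)) + ln (norm (N z))) has_derivative (\<lambda>h. Re (h * (N' / N z)))) (at z)" .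
  have "\<forall>\<^sub>F w in at z. N w \<noteq> 0"
    using tendsto_imp_eventually_ne[OF DERIV_isCont[OF N, unfolded isCont_def] nz] .
  then have "\<forall>\<^sub>F w in at z. Re (Ln (N w / N z)) + ln (norm (N z)) = ln (norm (N w))"
    by eventually_elim (use nz in \<open>simp add: norm_divide ln_div\<close>)
  from has_derivative_transform_eventually[OF D this]
  show ?thesis using nz by simp
qed

lemma harmonic_on_if_has_derivative_Re_holomorphic:
  assumes S: "open S" and G: "G holomorphic_on S"
    and u: "\<And>z. z \<in> S \<Longrightarrow> (u has_derivative (\<lambda>h. Re (h * G z))) (at z)"
  shows "harmonic_on S u"
proof -
  have dG: "(G has_field_derivative deriv G z) (at z)" if "z \<in> S" for z
    using holomorphic_derivI[OF G S that] .
  have "continuous_on S (deriv G)"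
    using holomorphic_on_imp_continuous_on[OF holomorphic_deriv[OF G S]] .
  then have cont: "continuous_on S (\<lambda>z. Re (deriv G z))" "continuous_on S (\<lambda>z. - Im (deriv G z))"
      "continuous_on S (\<lambda>z. - Re (deriv G z))"
    by (auto intro!: continuous_intros)
  have D: "(u has_derivative (\<lambda>h. Re h * Re (G z) + Im h * - Im (G z))) (at z) \<and>
      ((\<lambda>w. Re (G w)) has_derivative (\<lambda>h. Re h * Re (deriv G z) + Im h * - Im (deriv G z))) (at z) \<and>
      ((\<lambda>w. - Im (G w)) has_derivative (\<lambda>h. Re h * - Im (deriv G z) + Im h * - Re (deriv G z))) (at z)"
    if "z \<in> S" for z
  proof (intro conjI)
    show "(u has_derivative (\<lambda>h. Re h * Re (G z) + Im h * - Im (G z))) (at z)"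
      by (rule has_derivative_eq_rhs[OF u[OF that]]) (simp add: fun_eq_iff)
    show "((\<lambda>w. Re (G w)) has_derivative (\<lambda>h. Re h * Re (deriv G z) + Im h * - Im (deriv G z))) (at z)"
      by (rule has_derivative_eq_rhs[OF has_field_derivative_imp_has_derivative_Re[OF dG[OF that]]])
        (simp add: fun_eq_iff)
    show "((\<lambda>w. - Im (G w)) has_derivative (\<lambda>h. Re h * - Im (deriv G z) + Im h * - Re (deriv G z))) (at z)"
      by (rule has_derivative_eq_rhs[OF has_derivative_minus[OF
            has_field_derivative_imp_has_derivative_Im[OF dG[OF that]]]])
        (simp add: fun_eq_iff algebra_simps)
  qed
  show ?thesis
    unfolding harmonic_on_def
    by (rule conjI[OF S], rule exI[of _ "\<lambda>z. Re (G z)"], rule exI[of _ "\<lambda>z. - Im (G z)"],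
        rule exI[of _ "\<lambda>z. Re (deriv G z)"], rule exI[of _ "\<lambda>z. - Im (deriv G z)"],
        rule exI[of _ "\<lambda>z. - Im (deriv G z)"], rule exI[of _ "\<lambda>z. - Re (deriv G z)"])
      (use cont D in simp)
qed

lemma Re_contour_integral_linepath_eq_diff:
  fixes f :: "complex \<Rightarrow> complex" and E :: "complex \<Rightarrow> real"
  assumes f: "continuous_on (closed_segment a b) f"
    and E: "continuous_on (closed_segment a b) E"
    and E': "\<And>t. t \<in> {0<..<1} \<Longrightarrow>
               (E has_derivative (\<lambda>h. Re (h * f (linepath a b t)))) (at (linepath a b t))"
  shows "Re (contour_integral (linepath a b) f) = E b - E a"
proof -
  have "((\<lambda>t. f (linepath a b t) * (b - a)) has_integral contour_integral (linepath a b) f) {0..1}"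
    using has_contour_integral_integral[OF contour_integrable_continuous_linepath[OF f]]
    by (simp add: has_contour_integral_linepath)
  from has_integral_linear[OF this bounded_linear_Re]
  have Re_int: "((\<lambda>t. Re (f (linepath a b t) * (b - a))) has_integral
                  Re (contour_integral (linepath a b) f)) {0..1}"
    by (simp add: o_def)
  have "((\<lambda>t. Re (f (linepath a b t) * (b - a))) has_integral
          (E \<circ> linepath a b) 1 - (E \<circ> linepath a b) 0) {0..1}"
  proof (rule fundamental_theorem_of_calculus_interior)
    show "continuous_on {0..1} (E \<circ> linepath a b)"
      by (rule continuous_on_compose[OF continuous_on_linepath])
        (use E in \<open>simp add: path_image_linepath[symmetric, unfolded path_image_def]\<close>)
  next
    fix t :: real assume t: "t \<in> {0<..<1}"
    have "(linepath a b has_derivative (\<lambda>h. h *\<^sub>R (b - a))) (at t)"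
      unfolding linepath_def by (auto intro!: derivative_eq_intros simp: algebra_simps)
    from diff_chain_at[OF this E'[OF t]]
    show "((E \<circ> linepath a b) has_vector_derivative Re (f (linepath a b t) * (b - a))) (at t)"
      unfolding has_vector_derivative_def by (simp add: o_def scaleR_conv_of_real algebra_simps)
  qed simp
  then show ?thesis
    using has_integral_unique[OF Re_int] by (simp add: linepath_def)
qed

lemma csqrt_diff_commute:
  assumes "Im z \<noteq> 0 \<or> Re z < b"
  shows "csqrt (z - of_real b) = (if Im z < 0 then - \<i> else \<i>) * csqrt (of_real b - z)"
proof (cases "Im z < 0")
  case True
  then have "csqrt (- (z - of_real b)) = \<i> * csqrt (z - of_real b)"
    by (intro csqrt_minus) auto
  with True show ?thesis
    by (simp add: algebra_simps)
next
  case False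
  then have "csqrt (- (of_real b - z)) = \<i> * csqrt (of_real b - z)"
    using assms by (intro csqrt_minus) auto
  with False show ?thesis
    by simp
qed

lemma tendsto_zero_at_branch_point:
  fixes f :: "complex \<Rightarrow> complex"
  assumes "\<And>w. norm (f w) = sqrt (norm (w - a)) * sqrt (norm (w - b))"
  shows "(f \<longlongrightarrow> 0) (at a)"
proof (rule tendsto_norm_zero_cancel)
  have "((\<lambda>w. sqrt (norm (w - a)) * sqrt (norm (w - b))) \<longlongrightarrow> sqrt (norm (a - a)) * sqrt (norm (a - b))) (at a)"
    by (intro tendsto_intros)
  then show "((\<lambda>w. norm (f w)) \<longlongrightarrow> 0) (at a)"
    by (simp add: assms)
qed

lemma derivative_log_antiderivative_eq:
  fixes a b z R :: complex
  assumes R: "R^2 = z^2 - 2 * b * z + a^2" "R \<noteq> 0" and z: "z \<noteq> 0"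
    and N1: "z - b + R \<noteq> 0" and N2: "a^2 - b * z - a * R \<noteq> 0"
  shows "(z - b) / R / 2 - b / 2 * ((1 + (z - b) / R) / (z - b + R))
           + a / 2 * ((- b - a * ((z - b) / R)) / (a^2 - b * z - a * R)) - a / 2 * (1 / z)
         = R / (2 * z)"
proof -
  have "1 + (z - b) / R = (z - b + R) / R"
    using R(2) by (simp add: field_simps)
  then have N1_term: "(1 + (z - b) / R) / (z - b + R) = 1 / R"
    using N1 by simp
  define n2 where "n2 = a^2 - b * z - a * R"
  have "n2 \<noteq> 0"
    using N2 by (simp add: n2_def)
  have key: "z * (- b * R - a * (z - b)) - R * n2 = a * n2"
    unfolding n2_def using R(1) by algebra
  have "- b - a * ((z - b) / R) = (- b * R - a * (z - b)) / R"
    using R(2) by (simp add: field_simps)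
  then have "(- b - a * ((z - b) / R)) / n2 - 1 / z = (z * (- b * R - a * (z - b)) - R * n2) / (R * z * n2)"
    using R(2) z \<open>n2 \<noteq> 0\<close> by (simp add: field_simps)
  also have "\<dots> = a / (z * R)"
    using R(2) z \<open>n2 \<noteq> 0\<close> by (simp only: key) simp
  finally have N2_term: "(- b - a * ((z - b) / R)) / (a^2 - b * z - a * R) - 1 / z = a / (z * R)"
    by (simp add: n2_def)
  have "(z - b) / R / 2 - b / 2 * ((1 + (z - b) / R) / (z - b + R))
           + a / 2 * ((- b - a * ((z - b) / R)) / (a^2 - b * z - a * R)) - a / 2 * (1 / z)
        = (z - b) / R / 2 - b / 2 * ((1 + (z - b) / R) / (z - b + R))
           + a / 2 * ((- b - a * ((z - b) / R)) / (a^2 - b * z - a * R) - 1 / z)"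
    by (simp add: right_diff_distrib)
  also have "\<dots> = (z - b) / R / 2 - b / 2 * (1 / R) + a / 2 * (a / (z * R))"
    by (simp only: N1_term N2_term)
  also have "\<dots> = ((z - b) * z - b * z + a^2) / (2 * z * R)"
    using R(2) z by (simp add: field_simps power2_eq_square)
  also have "(z - b) * z - b * z + a^2 = R^2"
    using R(1) by (simp add: algebra_simps power2_eq_square)
  also have "R^2 / (2 * z * R) = R / (2 * z)"
    using R(2) by (simp add: power2_eq_square)
  finally show ?thesis .
qed

section \<open>Maximum principle with boundary limits\<close>

lemma compact_superlevel_set:
  fixes g :: "'a::heine_borel \<Rightarrow> real"
  assumes g: "continuous_on S g" and S: "open S" "bounded S"
    and frontier_less: "\<And>\<zeta>. \<zeta> \<in> frontier S \<Longrightarrow> \<forall>\<^sub>F z in at \<zeta> within S. g z < c"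
  shows "compact {z\<in>S. c \<le> g z}" (is "compact ?K")
proof -
  have closedin: "closedin (top_of_set S) ?K"
    using continuous_closedin_preimage[OF g closed_atLeast[of c]] by (simp add: vimage_def Int_def)
  have "x \<in> ?K" if x: "x islimpt ?K" for x
  proof (rule ccontr)
    assume "x \<notin> ?K"
    then have "x \<notin> S"
      using closedin x unfolding closedin_limpt by blast
    moreover have "x \<in> closure S"
      using islimpt_subset[OF x] by (auto simp: closure_def)
    ultimately have "x \<in> frontier S"
      using S(1) by (simp add: frontier_def interior_open)
    with frontier_less have "\<forall>\<^sub>F z in at x within ?K. g z < c"
      using filter_leD[OF at_le[of ?K S x]] by blast
    moreover have "\<forall>\<^sub>F z in at x within ?K. z \<in> ?K"
      by (simp add: eventually_at_filter)
    ultimately have "\<forall>\<^sub>F z in at x within ?K. False"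
      by eventually_elim auto
    then show False
      using x by (simp add: trivial_limit_within)
  qed
  then have "closed ?K"
    unfolding closed_limpt by blast
  moreover have "bounded ?K"
    using S(2) by (rule bounded_subset) auto
  ultimately show ?thesis
    by (simp add: compact_eq_bounded_closed)
qed

lemma holomorphic_norm_le_if_frontier_limsup_le:
  assumes f: "f holomorphic_on S" and S: "open S" "connected S" "bounded S"
    and frontier_less: "\<And>\<zeta> m. \<zeta> \<in> frontier S \<Longrightarrow> M < m \<Longrightarrow> \<forall>\<^sub>F z in at \<zeta> within S. norm (f z) < m"
    and z0: "z0 \<in> S"
  shows "norm (f z0) \<le> M"
proof (rule ccontr)
  define m where "m = norm (f z0)"
  define K where "K = {z\<in>S. m \<le> norm (f z)}"
  assume "\<not> norm (f z0) \<le> M"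
  then have "M < m" by (simp add: m_def)
  have cont: "continuous_on S (\<lambda>z. norm (f z))"
    using holomorphic_on_imp_continuous_on[OF f] by (intro continuous_intros)
  have "compact K"
    unfolding K_def using frontier_less \<open>M < m\<close> by (intro compact_superlevel_set[OF cont S(1,3)])
  moreover have "z0 \<in> K"
    using z0 by (simp add: K_def m_def)
  moreover have "continuous_on K (\<lambda>z. norm (f z))"
    by (rule continuous_on_subset[OF cont]) (simp add: K_def)
  ultimately obtain w where w: "w \<in> K" and max: "\<And>y. y \<in> K \<Longrightarrow> norm (f y) \<le> norm (f w)"
    using continuous_attains_sup[of K "\<lambda>z. norm (f z)"] by auto
  have "norm (f y) \<le> norm (f w)" if "y \<in> S" for y
  proof (cases "y \<in> K")
    case True with max show ?thesis by simp
  next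
    case False with w that show ?thesis by (simp add: K_def)
  qed
  moreover have "w \<in> S"
    using w by (simp add: K_def)
  ultimately have "f constant_on S"
    by (intro maximum_modulus_principle[OF f S(1,2) S(1) order_refl])
  then obtain c where c: "\<And>z. z \<in> S \<Longrightarrow> f z = c"
    by (auto simp: constant_on_def)
  obtain \<zeta> where \<zeta>: "\<zeta> \<in> frontier S"
    using frontier_not_empty[of S] z0 S(3) not_bounded_UNIV by blast
  then have "\<zeta> islimpt S"
    using S(1) by (auto simp: frontier_def interior_open closure_def)
  then have "at \<zeta> within S \<noteq> bot"
    by (simp add: trivial_limit_within)
  moreover have "\<forall>\<^sub>F z in at \<zeta> within S. norm (f z) < m \<and> z \<in> S"
    using frontier_less[OF \<zeta> \<open>M < m\<close>] by (simp add: eventually_at_filter eventually_conj_iff)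
  ultimately obtain z where "z \<in> S" "norm (f z) < m"
    using eventually_happens by blast
  moreover have "m \<le> norm (f z)"
    using c[OF \<open>z \<in> S\<close>] c[OF \<open>w \<in> S\<close>] w by (simp add: K_def)
  ultimately show False
    by simp
qed

lemma holomorphic_norm_eq_1_if_frontier_tendsto_1:
  assumes f: "f holomorphic_on S" and S: "open S" "connected S" "bounded S"
    and nonzero: "\<And>z. z \<in> S \<Longrightarrow> f z \<noteq> 0"
    and frontier: "\<And>\<zeta>. \<zeta> \<in> frontier S \<Longrightarrow> ((\<lambda>z. norm (f z)) \<longlongrightarrow> 1) (at \<zeta> within S)"
    and z: "z \<in> S"
  shows "norm (f z) = 1"
proof -
  have "norm (f z) \<le> 1"
    using order_tendstoD(2)[OF frontier]
    by (intro holomorphic_norm_le_if_frontier_limsup_le[OF f S _ z])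
  moreover have "norm (1 / f z) \<le> 1"
  proof (rule holomorphic_norm_le_if_frontier_limsup_le[OF _ S _ z])
    show "(\<lambda>z. 1 / f z) holomorphic_on S"
      using f nonzero by (intro holomorphic_intros)
  next
    fix \<zeta> and m :: real assume "\<zeta> \<in> frontier S" "1 < m"
    with tendsto_divide[OF tendsto_const frontier, of \<zeta> 1]
    show "\<forall>\<^sub>F z in at \<zeta> within S. norm (1 / f z) < m"
      using order_tendstoD(2) by (simp add: norm_divide)
  qed
  ultimately show ?thesis
    using nonzero[OF z] by (simp add: norm_divide divide_le_eq)
qed

lemma tendsto_frontier_comp_homeomorphism:
  fixes f :: "'a::heine_borel \<Rightarrow> 'b::metric_space" and \<psi> :: "'c::metric_space \<Rightarrow> 'a"
  assumes hom: "homeomorphism T S \<psi> \<phi>" and T: "open T" and S: "open S" "bounded S"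
    and f: "continuous_on S f"
    and frontier: "\<And>\<zeta>. \<zeta> \<in> frontier S \<Longrightarrow> (f \<longlongrightarrow> L) (at \<zeta> within S)"
    and \<xi>: "\<xi> \<in> frontier T"
  shows "((\<lambda>u. f (\<psi> u)) \<longlongrightarrow> L) (at \<xi> within T)"
proof (rule tendstoI)
  fix e :: real assume "0 < e"
  define K where "K = {z\<in>S. e \<le> dist (f z) L}"
  have "compact K"
    unfolding K_def
  proof (rule compact_superlevel_set[OF _ S])
    show "continuous_on S (\<lambda>z. dist (f z) L)"
      using f by (intro continuous_intros)
    show "\<forall>\<^sub>F z in at \<zeta> within S. dist (f z) L < e" if "\<zeta> \<in> frontier S" for \<zeta>
      using tendstoD[OF frontier[OF that] \<open>0 < e\<close>] .
  qed
  moreover have "K \<subseteq> S"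
    by (auto simp: K_def)
  moreover have "continuous_on K \<phi>"
    using hom continuous_on_subset[OF _ \<open>K \<subseteq> S\<close>] by (auto simp: homeomorphism_def)
  ultimately have "closed (\<phi> ` K)"
    by (intro compact_imp_closed compact_continuous_image)
  moreover have "\<xi> \<notin> \<phi> ` K"
    using \<xi> T \<open>K \<subseteq> S\<close> hom by (auto simp: homeomorphism_def frontier_def interior_open)
  ultimately have "\<forall>\<^sub>F u in at \<xi> within T. u \<notin> \<phi> ` K"
    using eventually_nhds_in_open[of "- \<phi> ` K" \<xi>] unfolding eventually_at_filter
    by (auto simp: open_Compl elim: eventually_mono)
  moreover have "\<forall>\<^sub>F u in at \<xi> within T. u \<in> T"
    by (simp add: eventually_at_filter)
  ultimately show "\<forall>\<^sub>F u in at \<xi> within T. dist (f (\<psi> u)) L < e"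
  proof eventually_elim
    case (elim u)
    then have "\<psi> u \<in> S" "\<phi> (\<psi> u) = u"
      using hom by (auto simp: homeomorphism_def)
    with elim show ?case
      unfolding K_def by (metis (mono_tags, lifting) image_eqI mem_Collect_eq not_le)
  qed
qed

lemma Riemann_map_fixing_0:
  fixes S :: "complex set"
  assumes "open S" "simply_connected S" "bounded S" "0 \<in> S"
  obtains \<psi> \<phi> where "\<psi> holomorphic_on ball 0 1" "homeomorphism (ball 0 1) S \<psi> \<phi>" "\<psi> 0 = 0"
proof -
  have "S \<noteq> {}" "S \<noteq> UNIV"
    using assms not_bounded_UNIV by auto
  then obtain f g where f: "f holomorphic_on S" and g: "g holomorphic_on ball 0 1"
    and gf: "\<forall>z\<in>S. f z \<in> ball 0 1 \<and> g (f z) = z"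
    and fg: "\<forall>u\<in>ball 0 1. g u \<in> S \<and> f (g u) = u"
    using Riemann_mapping_theorem[of S] assms by blast
  obtain m mi where m: "m (f 0) = 0" "m holomorphic_on ball 0 1" "m ` ball 0 1 \<subseteq> ball 0 1"
    and mi: "mi holomorphic_on ball 0 1" "mi ` ball 0 1 \<subseteq> ball 0 1"
    and inverse: "\<And>u. u \<in> ball 0 1 \<Longrightarrow> m (mi u) = u" "\<And>u. u \<in> ball 0 1 \<Longrightarrow> mi (m u) = u"
    using ball_biholomorphism_exists[of "f 0"] gf assms(4) by metis
  have \<psi>: "(g \<circ> mi) holomorphic_on ball 0 1"
    using g mi by (intro holomorphic_on_compose_gen[where t="ball 0 1"]) auto
  have \<phi>: "(m \<circ> f) holomorphic_on S"
    using f gf m by (intro holomorphic_on_compose_gen[where t="ball 0 1"]) auto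
  have "homeomorphism (ball 0 1) S (g \<circ> mi) (m \<circ> f)"
  proof (rule homeomorphismI)
    show "continuous_on (ball 0 1) (g \<circ> mi)" "continuous_on S (m \<circ> f)"
      using holomorphic_on_imp_continuous_on \<psi> \<phi> by blast+
    show "(g \<circ> mi) ` ball 0 1 \<subseteq> S" "(m \<circ> f) ` S \<subseteq> ball 0 1"
      using fg gf mi(2) m(3) by (auto simp: image_subset_iff)
    show "(m \<circ> f) ((g \<circ> mi) u) = u" if "u \<in> ball 0 1" for u
      using that fg mi(2) inverse by (auto simp: image_subset_iff)
    show "(g \<circ> mi) ((m \<circ> f) z) = z" if "z \<in> S" for z
      using that gf m(3) inverse by (auto simp: image_subset_iff)
  qed
  moreover have "(g \<circ> mi) 0 = 0"
    using inverse(2)[of "f 0"] m(1) gf assms(4) by simp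
  ultimately show ?thesis
    using that \<psi> by blast
qed

lemma injective_holomorphic_factor_zero:
  fixes \<psi> :: "complex \<Rightarrow> complex"
  assumes \<psi>: "\<psi> holomorphic_on S" "open S" "inj_on \<psi> S" "0 \<in> S" "\<psi> 0 = 0"
  obtains q where "q holomorphic_on S" "\<And>u. u \<in> S \<Longrightarrow> q u \<noteq> 0 \<and> \<psi> u = u * q u"
proof
  define q where "q u = (if u = 0 then deriv \<psi> 0 else \<psi> u / u)" for u
  show "q holomorphic_on S"
    using \<psi>(2,4) by (intro holomorphic_transform[OF pole_lemma[OF \<psi>(1), of 0]])
      (simp_all add: q_def \<psi>(5) interior_open)
  show "q u \<noteq> 0 \<and> \<psi> u = u * q u" if "u \<in> S" for u
  proof (cases "u = 0")
    case True
    then show ?thesis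
      using holomorphic_injective_imp_regular[OF \<psi>(1-3) that] \<psi>(5) by (simp add: q_def)
  next
    case False
    then have "\<psi> u \<noteq> \<psi> 0"
      using inj_onD[OF \<psi>(3) _ that \<psi>(4)] by blast
    with False \<psi>(5) show ?thesis
      by (simp add: q_def)
  qed
qed

lemma Riemann_map_normalizes_modulus:
  fixes S :: "complex set" and P :: "complex \<Rightarrow> complex"
  assumes S: "open S" "bounded S" "simply_connected S" "0 \<in> S"
    and P: "P holomorphic_on S" "\<And>z. z \<in> S \<Longrightarrow> P z \<noteq> 0"
    and frontier: "\<And>\<zeta>. \<zeta> \<in> frontier S \<Longrightarrow> ((\<lambda>z. norm (z * P z)) \<longlongrightarrow> 1) (at \<zeta> within S)"
  obtains \<psi> where "\<psi> holomorphic_on ball 0 1" "inj_on \<psi> (ball 0 1)" "\<psi> ` ball 0 1 = S" "\<psi> 0 = 0"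
    "\<And>u. u \<in> ball 0 1 \<Longrightarrow> norm (\<psi> u * P (\<psi> u)) = norm u"
proof -
  obtain \<psi> \<phi> where \<psi>: "\<psi> holomorphic_on ball 0 1" and hom: "homeomorphism (ball 0 1) S \<psi> \<phi>"
    and \<psi>0: "\<psi> 0 = 0"
    using Riemann_map_fixing_0[OF S(1,3,2,4)] by blast
  have img: "\<psi> ` ball 0 1 = S" and \<phi>\<psi>: "\<And>u. u \<in> ball 0 1 \<Longrightarrow> \<phi> (\<psi> u) = u"
    using hom by (simp_all add: homeomorphism_def)
  have inj: "inj_on \<psi> (ball 0 1)"
    using \<phi>\<psi> by (rule inj_on_inverseI)
  obtain q where q: "q holomorphic_on ball 0 1"
    and q_eq: "\<And>u. u \<in> ball 0 1 \<Longrightarrow> q u \<noteq> 0 \<and> \<psi> u = u * q u"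
    using injective_holomorphic_factor_zero[OF \<psi> open_ball inj _ \<psi>0] by auto
  define Q where "Q u = q u * P (\<psi> u)" for u
  have Q: "Q holomorphic_on ball 0 1"
    unfolding Q_def[abs_def] using q holomorphic_on_compose_gen[OF \<psi> P(1)] img
    by (intro holomorphic_intros) (auto simp: o_def)
  have Q_nonzero: "Q u \<noteq> 0" and F_eq: "\<psi> u * P (\<psi> u) = u * Q u" if "u \<in> ball 0 1" for u
    using q_eq[OF that] P(2)[OF imageI[OF that, of \<psi>, unfolded img]] by (simp_all add: Q_def)
  have Q_lim: "((\<lambda>u. norm (Q u)) \<longlongrightarrow> 1) (at \<xi> within ball 0 1)" if \<xi>: "\<xi> \<in> frontier (ball 0 1)" for \<xi>
  proof -
    have "((\<lambda>u. norm (\<psi> u * P (\<psi> u))) \<longlongrightarrow> 1) (at \<xi> within ball 0 1)"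
      using holomorphic_on_imp_continuous_on[OF P(1)] S(1,2) \<xi> frontier
      by (intro tendsto_frontier_comp_homeomorphism[OF hom open_ball, where f="\<lambda>z. norm (z * P z)"])
        (auto intro!: continuous_intros)
    then have "((\<lambda>u. norm (\<psi> u * P (\<psi> u)) / norm u) \<longlongrightarrow> 1 / norm \<xi>) (at \<xi> within ball 0 1)"
      using \<xi> by (intro tendsto_intros) auto
    moreover have "\<forall>\<^sub>F u in at \<xi> within ball 0 1. norm (\<psi> u * P (\<psi> u)) / norm u = norm (Q u)"
    proof -
      have "\<forall>\<^sub>F u in at \<xi> within ball 0 1. u \<noteq> 0"
        using \<xi> by (intro tendsto_imp_eventually_ne[OF tendsto_ident_at]) auto
      moreover have "\<forall>\<^sub>F u in at \<xi> within ball 0 1. u \<in> ball 0 1"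
        by (simp add: eventually_at_filter)
      ultimately show ?thesis
        by eventually_elim (simp add: F_eq norm_mult)
    qed
    ultimately have "((\<lambda>u. norm (Q u)) \<longlongrightarrow> 1 / norm \<xi>) (at \<xi> within ball 0 1)"
      by (rule Lim_transform_eventually)
    with \<xi> show ?thesis
      by simp
  qed
  have Q_norm: "norm (Q u) = 1" if "u \<in> ball 0 1" for u
    by (rule holomorphic_norm_eq_1_if_frontier_tendsto_1[OF Q open_ball connected_ball bounded_ball
          Q_nonzero Q_lim that])
  show ?thesis
    by (rule that[OF \<psi> inj img \<psi>0]) (simp add: F_eq Q_norm norm_mult)
qed

section \<open>Level sets and images of circles\<close>

lemma level_set_eq_image_sphere:
  fixes \<psi> :: "complex \<Rightarrow> complex" and f :: "complex \<Rightarrow> real"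
  assumes \<psi>: "inj_on \<psi> (ball 0 1)" "\<psi> ` ball 0 1 = S" "\<psi> 0 = 0"
    and f: "\<And>u. u \<in> ball 0 1 - {0} \<Longrightarrow> f (\<psi> u) = - c * ln (norm u)"
    and "0 < c" "0 < t"
  shows "{z \<in> S - {0}. f z = t} = \<psi> ` sphere 0 (exp (- t / c))"
proof (rule equalityI; rule subsetI)
  fix z assume "z \<in> {z \<in> S - {0}. f z = t}"
  then have z: "z \<in> S" "z \<noteq> 0" "f z = t"
    by auto
  then obtain u where u: "u \<in> ball 0 1" "z = \<psi> u"
    using \<psi>(2) by blast
  with z \<psi>(3) have "u \<noteq> 0"
    by auto
  with u z f[of u] have "ln (norm u) = - t / c"
    using \<open>0 < c\<close> by (simp add: field_simps)
  then have "norm u = exp (- t / c)"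
    using \<open>u \<noteq> 0\<close> by (metis exp_ln zero_less_norm_iff)
  with u show "z \<in> \<psi> ` sphere 0 (exp (- t / c))"
    by auto
next
  fix z assume "z \<in> \<psi> ` sphere 0 (exp (- t / c))"
  then obtain u where u: "u \<in> sphere 0 (exp (- t / c))" "z = \<psi> u"
    by blast
  have "exp (- t / c) < 1"
    using \<open>0 < c\<close> \<open>0 < t\<close> by simp
  with u have u_ball: "u \<in> ball 0 1 - {0}"
    by auto
  have "\<psi> u \<noteq> \<psi> 0"
  proof
    assume "\<psi> u = \<psi> 0"
    from inj_onD[OF \<psi>(1) this] u_ball have "u = 0"
      by simp
    with u_ball show False
      by simp
  qed
  moreover have "f (\<psi> u) = t"
    using f[OF u_ball] u \<open>0 < c\<close> by simp
  moreover have "\<psi> u \<in> S"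
    using \<psi>(2) u_ball by blast
  ultimately show "z \<in> {z \<in> S - {0}. f z = t}"
    using u(2) \<psi>(3) by simp
qed

lemma image_ball_subset_inside_image_sphere:
  fixes \<psi> :: "'a::euclidean_space \<Rightarrow> 'a"
  assumes \<psi>: "continuous_on (cball a r) \<psi>" "inj_on \<psi> (cball a r)"
  shows "\<psi> ` ball a r \<subseteq> inside (\<psi> ` sphere a r)"
proof
  fix x assume "x \<in> \<psi> ` ball a r"
  then obtain u where u: "u \<in> ball a r" "x = \<psi> u" by blast
  have "0 < r"
    using u(1) zero_le_dist[of a u] unfolding mem_ball by linarith
  have x_notin: "x \<notin> \<psi> ` sphere a r"
  proof
    assume "x \<in> \<psi> ` sphere a r"
    then obtain v where v: "v \<in> sphere a r" "\<psi> v = \<psi> u"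
      using u(2) by auto
    have "v = u"
      using inj_onD[OF \<psi>(2) v(2)] v(1) u(1) sphere_cball ball_subset_cball by blast
    with u(1) v(1) show False
      by simp
  qed
  have compact: "compact (\<psi> ` cball a r)"
    by (rule compact_continuous_image[OF \<psi>(1) compact_cball])
  define C where "C = connected_component_set (- \<psi> ` sphere a r) x"
  have "connected C"
    by (simp add: C_def)
  moreover have "open (\<psi> ` ball a r)"
    by (rule invariance_of_domain_ball[OF \<psi>(1) \<open>0 < r\<close> \<psi>(2)])
  moreover have "open (- \<psi> ` cball a r)"
    using compact by (simp add: compact_imp_closed open_Compl)
  moreover have "\<psi> ` ball a r \<inter> - \<psi> ` cball a r \<inter> C = {}"
    using ball_subset_cball[of a r] by blast
  moreover have "C \<subseteq> \<psi> ` ball a r \<union> - \<psi> ` cball a r"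
  proof
    fix y assume "y \<in> C"
    then have "y \<notin> \<psi> ` sphere a r"
      using connected_component_subset unfolding C_def by blast
    then show "y \<in> \<psi> ` ball a r \<union> - \<psi> ` cball a r"
      using cball_diff_sphere[of a r] by blast
  qed
  ultimately have "\<psi> ` ball a r \<inter> C = {} \<or> - \<psi> ` cball a r \<inter> C = {}"
    by (rule connectedD)
  moreover have "x \<in> \<psi> ` ball a r \<inter> C"
    using u x_notin by (simp add: C_def)
  ultimately have "C \<subseteq> \<psi> ` cball a r"
    by blast
  then have "bounded C"
    using compact_imp_bounded[OF compact] bounded_subset by blast
  with x_notin show "x \<in> inside (\<psi> ` sphere a r)"
    by (simp add: inside_def C_def)
qed

lemma simple_closed_curve_image_circlepath:
  fixes \<psi> :: "complex \<Rightarrow> complex"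
  assumes \<psi>: "continuous_on (cball a r) \<psi>" "inj_on \<psi> (cball a r)" and "0 < r"
  shows "simple_path (\<psi> \<circ> circlepath a r)"
    "pathfinish (\<psi> \<circ> circlepath a r) = pathstart (\<psi> \<circ> circlepath a r)"
    "path_image (\<psi> \<circ> circlepath a r) = \<psi> ` sphere a r"
proof -
  have sphere: "path_image (circlepath a r) = sphere a r" "sphere a r \<subseteq> cball a r"
    using \<open>0 < r\<close> by (auto simp: path_image_circlepath)
  show "simple_path (\<psi> \<circ> circlepath a r)"
  proof (rule simple_path_continuous_image)
    show "simple_path (circlepath a r)"
      using \<open>0 < r\<close> by (simp add: simple_path_circlepath)
    show "continuous_on (path_image (circlepath a r)) \<psi>"
      unfolding sphere(1) by (rule continuous_on_subset[OF \<psi>(1) sphere(2)])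
    show "inj_on \<psi> (path_image (circlepath a r))"
      unfolding sphere(1) by (rule inj_on_subset[OF \<psi>(2) sphere(2)])
  qed
  show "pathfinish (\<psi> \<circ> circlepath a r) = pathstart (\<psi> \<circ> circlepath a r)"
    by (simp add: pathfinish_compose pathstart_compose)
  show "path_image (\<psi> \<circ> circlepath a r) = \<psi> ` sphere a r"
    using \<open>0 < r\<close> by (simp add: path_image_compose)
qed

lemma connected_unbounded_disjoint_inside:
  assumes "connected C" "\<not> bounded C" "C \<inter> S = {}"
  shows "C \<inter> inside S = {}"
proof -
  have "\<not> bounded (connected_component_set (- S) x)" if "x \<in> C" for x
  proof
    assume "bounded (connected_component_set (- S) x)"
    moreover have "C \<subseteq> connected_component_set (- S) x"
      using assms(1,3) that by (intro connected_component_maximal) auto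
    ultimately show False
      using assms(2) bounded_subset by auto
  qed
  then show ?thesis
    by (auto simp: inside_def)
qed

section \<open>A closed form of \<open>Re \<phi>\<close> on the slit plane\<close>

definition slit :: "real \<Rightarrow> complex set" where
  "slit A = - {z. Im z = 0 \<and> beta1 A \<le> Re z}"

text \<open>The branch of \<open>R\<close> on the slit plane: it agrees with \<open>Rfun\<close> there (\<open>Rfun_eq_R_slit\<close>),
  but, unlike the two factors of \<open>Rfun\<close>, its factors are continuous across \<open>(-\<infinity>, \<beta>\<^sub>1)\<close>.\<close>

definition R_slit :: "real \<Rightarrow> complex \<Rightarrow> complex" where
  "R_slit A z = - (csqrt (of_real (beta1 A) - z) * csqrt (of_real (beta2 A) - z))"

definition N1 :: "real \<Rightarrow> complex \<Rightarrow> complex" where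
  "N1 A z = z - of_real (2 - A) + R_slit A z"

definition N2 :: "real \<Rightarrow> complex \<Rightarrow> complex" where
  "N2 A z = of_real A ^ 2 - of_real (2 - A) * z - of_real A * R_slit A z"

definition Ephi :: "real \<Rightarrow> complex \<Rightarrow> real" where
  "Ephi A z = Re (R_slit A z) / 2 - (2 - A) / 2 * ln (norm (N1 A z))
              + A / 2 * ln (norm (N2 A z)) - A / 2 * ln (norm z)"

lemma mem_slit_iff: "z \<in> slit A \<longleftrightarrow> Im z \<noteq> 0 \<or> Re z < beta1 A"
  by (auto simp: slit_def)

lemma open_slit: "open (slit A)"
  unfolding slit_def
  by (intro open_Compl closed_Collect_conj closed_Collect_eq closed_Collect_le continuous_intros)

context
  fixes A :: real
  assumes A: "0 < A" "A < 1"
begin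

abbreviation b1 :: complex where "b1 \<equiv> of_real (beta1 A)"

lemma beta1_mult_beta2: "beta1 A * beta2 A = A^2"
  and beta1_add_beta2: "beta1 A + beta2 A = 2 * (2 - A)"
  and beta1_less_beta2: "beta1 A < beta2 A"
  and beta1_pos: "0 < beta1 A"
proof -
  define s where "s = sqrt (1 - A)"
  have s: "0 < s" "s^2 = 1 - A"
    using A by (auto simp: s_def)
  show *: "beta1 A * beta2 A = A^2" "beta1 A + beta2 A = 2 * (2 - A)" "beta1 A < beta2 A"
    using s by (simp_all add: beta1_def beta2_def s_def[symmetric] algebra_simps power2_eq_square)
  have "0 < beta2 A"
    using s A by (simp add: beta2_def s_def[symmetric])
  with *(1) A show "0 < beta1 A"
    by (metis zero_less_mult_pos2 zero_less_power)
qed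

lemma zero_in_slit: "0 \<in> slit A"
  using beta1_pos by (simp add: mem_slit_iff)

lemma starlike_slit: "starlike (slit A)"
  unfolding starlike_def
proof (intro bexI[OF _ zero_in_slit] ballI subsetI)
  fix z x assume z: "z \<in> slit A" and "x \<in> closed_segment 0 z"
  then obtain u where u: "0 \<le> u" "u \<le> 1" "x = u *\<^sub>R z"
    by (auto simp: closed_segment_def)
  show "x \<in> slit A"
  proof (cases "Im z = 0 \<and> u \<noteq> 0")
    case True
    with z have "Re z < beta1 A"
      by (simp add: mem_slit_iff)
    have "u * Re z < beta1 A"
    proof (cases "Re z \<le> 0")
      case True
      then have "u * Re z \<le> 0"
        using u by (simp add: mult_nonneg_nonpos)
      with beta1_pos show ?thesis
        by linarith
    next
      case False
      then have "u * Re z \<le> Re z"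
        using u by (simp add: mult_left_le_one_le)
      with \<open>Re z < beta1 A\<close> show ?thesis
        by linarith
    qed
    with u show ?thesis
      by (simp add: mem_slit_iff)
  next
    case False
    with u z beta1_pos show ?thesis
      by (auto simp: mem_slit_iff)
  qed
qed

lemma Rfun_eq_R_slit:
  assumes "z \<in> slit A"
  shows "Rfun A z = R_slit A z"
proof -
  have "Im z \<noteq> 0 \<or> Re z < beta1 A" "Im z \<noteq> 0 \<or> Re z < beta2 A"
    using assms beta1_less_beta2 by (auto simp: mem_slit_iff)
  then show ?thesis
    unfolding Rfun_def R_slit_def by (simp add: csqrt_diff_commute algebra_simps)
qed

lemma R_slit_squared: "(R_slit A z)^2 = z^2 - 2 * of_real (2 - A) * z + of_real A ^ 2"
proof -
  have "(R_slit A z)^2 = (b1 - z) * (of_real (beta2 A) - z)"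
    by (simp add: R_slit_def power_mult_distrib)
  also have "\<dots> = z^2 - of_real (beta1 A + beta2 A) * z + of_real (beta1 A * beta2 A)"
    by (simp add: algebra_simps power2_eq_square)
  finally show ?thesis
    by (simp add: beta1_mult_beta2 beta1_add_beta2)
qed

lemma slit_not_nonpos_Reals:
  assumes "z \<in> slit A" "beta1 A \<le> b"
  shows "of_real b - z \<notin> \<real>\<^sub>\<le>\<^sub>0"
  using assms by (auto simp: mem_slit_iff complex_nonpos_Reals_iff)

lemma R_slit_nonzero: "z \<in> slit A \<Longrightarrow> R_slit A z \<noteq> 0"
  using slit_not_nonpos_Reals[of z "beta1 A"] slit_not_nonpos_Reals[of z "beta2 A"] beta1_less_beta2
  by (auto simp: R_slit_def)

lemma R_slit_zero: "R_slit A 0 = - of_real A"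
proof -
  have "sqrt (beta1 A) * sqrt (beta2 A) = A"
    using A by (simp add: real_sqrt_mult[symmetric] beta1_mult_beta2)
  then show ?thesis
    using beta1_pos beta1_less_beta2 by (simp add: R_slit_def csqrt_of_real flip: of_real_mult)
qed

lemma has_field_derivative_R_slit:
  assumes "z \<in> slit A"
  shows "(R_slit A has_field_derivative (z - of_real (2 - A)) / R_slit A z) (at z)"
proof -
  define c1 where "c1 = csqrt (b1 - z)"
  define c2 where "c2 = csqrt (of_real (beta2 A) - z)"
  have nonpos: "b1 - z \<notin> \<real>\<^sub>\<le>\<^sub>0" "of_real (beta2 A) - z \<notin> \<real>\<^sub>\<le>\<^sub>0"
    using slit_not_nonpos_Reals[OF assms] beta1_less_beta2 by auto
  then have c: "c1 \<noteq> 0" "c2 \<noteq> 0" "c1^2 + c2^2 = 2 * of_real (2 - A) - 2 * z"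
    using beta1_add_beta2 by (auto simp: c1_def c2_def simp flip: of_real_add)
  have "(R_slit A has_field_derivative - (- c2 / (2 * c1) - c1 / (2 * c2))) (at z)"
    unfolding R_slit_def[abs_def] c1_def c2_def
    by (rule derivative_eq_intros refl nonpos | simp add: field_simps)+
  moreover have "- (- c2 / (2 * c1) - c1 / (2 * c2)) = (c1^2 + c2^2) / (2 * c1 * c2)"
    using c by (simp add: field_simps power2_eq_square)
  moreover have "\<dots> = (z - of_real (2 - A)) / R_slit A z"
    unfolding c(3) R_slit_def c1_def[symmetric] c2_def[symmetric] using c by (simp add: field_simps)
  ultimately show ?thesis
    by simp
qed

lemma holomorphic_R_slit: "R_slit A holomorphic_on slit A"
  using has_field_derivative_R_slit open_slit holomorphic_on_open by blast

lemma N1_nonzero: "z \<in> slit A \<Longrightarrow> N1 A z \<noteq> 0"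
proof
  assume "N1 A z = 0"
  then have "R_slit A z = of_real (2 - A) - z"
    by (simp add: N1_def algebra_simps)
  then have "(of_real (2 - A) - z)^2 = z^2 - 2 * of_real (2 - A) * z + of_real A ^ 2"
    using R_slit_squared by metis
  then have "complex_of_real ((2 - A)^2) = complex_of_real (A^2)"
    by (simp add: algebra_simps power2_eq_square)
  then have "(2 - A)^2 = A^2"
    using of_real_eq_iff by blast
  with A show False
    by (simp add: power2_eq_square algebra_simps)
qed

lemma N2_nonzero: "z \<in> slit A \<Longrightarrow> N2 A z \<noteq> 0"
proof
  assume N2: "N2 A z = 0"
  show False
  proof (cases "z = 0")
    case True
    with N2 A show False
      by (simp add: N2_def R_slit_zero power2_eq_square)
  next
    case False
    from N2 have "of_real A * R_slit A z = of_real A ^ 2 - of_real (2 - A) * z"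
      by (simp add: N2_def algebra_simps)
    then have "(of_real A)^2 * (R_slit A z)^2 = (of_real A ^ 2 - of_real (2 - A) * z)^2"
      by (metis power_mult_distrib)
    then have "(of_real A)^2 * (z^2 - 2 * of_real (2 - A) * z + (of_real A)^2)
               = (of_real A ^ 2 - of_real (2 - A) * z)^2"
      by (simp add: R_slit_squared)
    then have "of_real (A^2 - (2 - A)^2) * z^2 = 0"
      by (simp add: algebra_simps power2_eq_square)
    with False have "complex_of_real (A^2 - (2 - A)^2) = 0"
      by (simp only: mult_eq_0_iff power_eq_0_iff) simp
    then have "A^2 - (2 - A)^2 = 0"
      by (simp only: of_real_eq_0_iff)
    with A show False
      by (simp add: power2_eq_square algebra_simps)
  qed
qed

lemma has_derivative_Ephi:
  assumes z: "z \<in> slit A" "z \<noteq> 0"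
  shows "(Ephi A has_derivative (\<lambda>h. Re (h * (R_slit A z / (2 * z))))) (at z)"
proof -
  define a where "a = complex_of_real A"
  define b where "b = complex_of_real (2 - A)"
  define R where "R = R_slit A z"
  define R' where "R' = (z - b) / R"
  have dR: "(R_slit A has_field_derivative R') (at z)"
    unfolding R'_def R_def b_def using has_field_derivative_R_slit[OF z(1)] .
  have dN1: "(N1 A has_field_derivative 1 + R') (at z)"
    unfolding N1_def[abs_def] by (rule derivative_eq_intros dR refl | simp)+
  have dN2: "(N2 A has_field_derivative - b - a * R') (at z)"
    unfolding N2_def[abs_def] a_def b_def by (rule derivative_eq_intros dR refl | simp)+
  have N: "N1 A z = z - b + R" "N2 A z = a^2 - b * z - a * R"
    by (simp_all add: N1_def N2_def a_def b_def R_def)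
  have D: "(Ephi A has_derivative (\<lambda>h. Re (h * R') / 2 - (2 - A) / 2 * Re (h * ((1 + R') / N1 A z))
       + A / 2 * Re (h * ((- b - a * R') / N2 A z)) - A / 2 * Re (h * (1 / z)))) (at z)"
    unfolding Ephi_def[abs_def]
    by (intro derivative_intros has_derivative_ln_norm dN1 dN2 DERIV_ident N1_nonzero N2_nonzero z
        bounded_linear.has_derivative[OF bounded_linear_divide has_field_derivative_imp_has_derivative_Re[OF dR]])
  have lin: "Re (h * P) / 2 - c1 * Re (h * Q) + c2 * Re (h * S) - c3 * Re (h * T)
      = Re (h * (P / 2 - of_real c1 * Q + of_real c2 * S - of_real c3 * T))" for h P Q S T c1 c2 c3
    by (simp add: algebra_simps)
  have X: "R' / 2 - of_real ((2 - A) / 2) * ((1 + R') / N1 A z)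
       + of_real (A / 2) * ((- b - a * R') / N2 A z) - of_real (A / 2) * (1 / z) = R / (2 * z)"
  proof -
    have "(z - b) / R / 2 - b / 2 * ((1 + (z - b) / R) / (z - b + R))
           + a / 2 * ((- b - a * ((z - b) / R)) / (a^2 - b * z - a * R)) - a / 2 * (1 / z)
         = R / (2 * z)"
      using R_slit_squared[of z] R_slit_nonzero[OF z(1)] z(2) N1_nonzero[OF z(1)] N2_nonzero[OF z(1)]
      unfolding N by (intro derivative_log_antiderivative_eq) (simp_all add: a_def b_def R_def)
    then show ?thesis
      by (simp add: N R'_def a_def b_def)
  qed
  show ?thesis
    using D unfolding lin X R_def .
qed

lemma tendsto_R_slit_beta1: "(R_slit A \<longlongrightarrow> 0) (at b1)"
  by (rule tendsto_zero_at_branch_point[where b = "of_real (beta2 A)"])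
    (simp add: R_slit_def norm_mult norm_minus_commute)

lemma tendsto_Rfun_beta1: "(Rfun A \<longlongrightarrow> 0) (at b1)"
  by (rule tendsto_zero_at_branch_point[where b = "of_real (beta2 A)"]) (simp add: Rfun_def norm_mult)

lemma isCont_Ephi_beta1: "isCont (Ephi A) b1"
proof -
  have R: "isCont (R_slit A) b1"
    using tendsto_R_slit_beta1 by (simp add: isCont_def R_slit_def)
  have "beta1 A - (2 - A) < 0"
    using beta1_add_beta2 beta1_less_beta2 by (simp add: algebra_simps)
  moreover have "N1 A b1 = of_real (beta1 A - (2 - A))"
    by (simp add: N1_def R_slit_def)
  ultimately have N1: "N1 A b1 \<noteq> 0"
    by (metis of_real_eq_0_iff less_irrefl)
  have "A^2 - (2 - A) * beta1 A = beta1 A * beta2 A - (beta1 A + beta2 A) / 2 * beta1 A"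
    using beta1_mult_beta2 beta1_add_beta2 by simp
  also have "\<dots> = beta1 A * (beta2 A - beta1 A) / 2"
    by (simp add: field_simps)
  finally have "A^2 - (2 - A) * beta1 A = beta1 A * (beta2 A - beta1 A) / 2" .
  moreover have "0 < beta1 A * (beta2 A - beta1 A)"
    using beta1_pos beta1_less_beta2 by simp
  ultimately have "0 < A^2 - (2 - A) * beta1 A"
    by simp
  moreover have "N2 A b1 = of_real (A^2 - (2 - A) * beta1 A)"
    by (simp add: N2_def R_slit_def)
  ultimately have N2: "N2 A b1 \<noteq> 0"
    by (metis of_real_eq_0_iff less_irrefl)
  show ?thesis
    unfolding Ephi_def[abs_def] N1_def[abs_def] N2_def[abs_def]
    using R N1 N2 beta1_pos by (intro continuous_intros) (auto simp: N1_def N2_def)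
qed

lemma isCont_Ephi: "z \<in> slit A \<Longrightarrow> z \<noteq> 0 \<Longrightarrow> isCont (Ephi A) z"
  using has_derivative_continuous[OF has_derivative_Ephi] .

lemma isCont_Rfun_div:
  assumes "z \<in> insert b1 (slit A - {0})"
  shows "isCont (\<lambda>s. Rfun A s / s) z"
  using assms
proof (cases "z = b1")
  case True
  have "((\<lambda>s. Rfun A s / s) \<longlongrightarrow> 0 / b1) (at b1)"
    by (intro tendsto_intros tendsto_Rfun_beta1) (use beta1_pos in simp)
  with True show ?thesis
    by (simp add: isCont_def Rfun_def)
next
  case False
  with assms have z: "z \<in> slit A - {0}"
    by simp
  have cont: "isCont (\<lambda>s. R_slit A s / s) z"
    using holomorphic_on_imp_continuous_on[OF holomorphic_R_slit] open_slit z
    by (intro continuous_intros) (auto simp: continuous_on_eq_continuous_at)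
  have "\<forall>\<^sub>F s in nhds z. Rfun A s / s = R_slit A s / s"
    using eventually_nhds_in_open[OF open_slit, of z A] z
    by (auto elim!: eventually_mono simp: Rfun_eq_R_slit)
  from isCont_cong[OF this] cont show ?thesis
    by blast
qed

lemma linepath_beta1_in_slit:
  assumes "z \<notin> cutset A" "0 < t" "t \<le> 1"
  shows "linepath b1 z t \<in> slit A - {0}"
proof -
  have z: "Im z \<noteq> 0 \<or> 0 < Re z \<and> Re z < beta1 A"
    using assms(1) by (auto simp: cutset_def)
  have Im: "Im (linepath b1 z t) = t * Im z"
    and Re: "Re (linepath b1 z t) = beta1 A - t * beta1 A + t * Re z"
    by (simp_all add: linepath_def algebra_simps)
  show ?thesis
  proof (cases "Im z = 0")
    case False
    then show ?thesis
      using Im assms(2) by (auto simp: mem_slit_iff)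
  next
    case True
    with z have "t * Re z < t * beta1 A" "0 < t * Re z"
      using assms(2) by auto
    moreover have "t * beta1 A \<le> beta1 A"
      using assms(2,3) beta1_pos by (simp add: mult_left_le_one_le)
    ultimately show ?thesis
      using Re by (auto simp: mem_slit_iff)
  qed
qed

lemma closed_segment_beta1_subset:
  assumes "z \<notin> cutset A"
  shows "closed_segment b1 z \<subseteq> insert b1 (slit A - {0})"
proof
  fix w assume "w \<in> closed_segment b1 z"
  then obtain t where "0 \<le> t" "t \<le> 1" "w = linepath b1 z t"
    by (metis atLeastAtMost_iff imageE path_image_def path_image_linepath)
  then show "w \<in> insert b1 (slit A - {0})"
    using linepath_beta1_in_slit[OF assms, of t] by (cases "t = 0") (auto simp: linepath_def)
qed

lemma Re_phi_eq_Ephi: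
  assumes "z \<notin> cutset A"
  shows "Re (phi A z) = Ephi A z - Ephi A b1"
proof -
  have "Re (contour_integral (linepath b1 z) (\<lambda>s. Rfun A s / s)) = 2 * Ephi A z - 2 * Ephi A b1"
  proof (rule Re_contour_integral_linepath_eq_diff)
    show "continuous_on (closed_segment b1 z) (\<lambda>s. Rfun A s / s)"
      using closed_segment_beta1_subset[OF assms]
      by (intro continuous_at_imp_continuous_on ballI isCont_Rfun_div) auto
    have "isCont (Ephi A) w" if "w \<in> closed_segment b1 z" for w
      using closed_segment_beta1_subset[OF assms] that isCont_Ephi isCont_Ephi_beta1 by blast
    then show "continuous_on (closed_segment b1 z) (\<lambda>w. 2 * Ephi A w)"
      by (intro continuous_at_imp_continuous_on ballI continuous_mult_left) auto
  next
    fix t :: real assume "t \<in> {0<..<1}"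
    then have w: "linepath b1 z t \<in> slit A - {0}"
      using linepath_beta1_in_slit[OF assms] by simp
    define Y where "Y = R_slit A (linepath b1 z t) / (2 * linepath b1 z t)"
    have eq: "Rfun A (linepath b1 z t) / linepath b1 z t = 2 * Y"
      using w by (simp add: Y_def Rfun_eq_R_slit)
    have "((\<lambda>w. 2 * Ephi A w) has_derivative (\<lambda>h. 2 * Re (h * Y))) (at (linepath b1 z t))"
      unfolding Y_def by (rule has_derivative_mult_right[OF has_derivative_Ephi]) (use w in auto)
    then show "((\<lambda>w. 2 * Ephi A w) has_derivative
            (\<lambda>h. Re (h * (Rfun A (linepath b1 z t) / linepath b1 z t)))) (at (linepath b1 z t))"
      by (rule has_derivative_eq_rhs) (simp add: eq fun_eq_iff algebra_simps)
  qed
  then show ?thesis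
    by (simp add: phi_def)
qed

lemma RePhi_eq_Ephi:
  assumes z: "z \<in> slit A" "z \<noteq> 0"
  shows "RePhi A z = Ephi A z - Ephi A b1"
proof (cases "z \<in> cutset A")
  case False
  then show ?thesis
    by (simp add: RePhi_def Re_phi_eq_Ephi)
next
  case True
  have "((\<lambda>w. Ephi A w - Ephi A b1) \<longlongrightarrow> Ephi A z - Ephi A b1) (at z within - cutset A)"
    using tendsto_within_subset[OF isCont_Ephi[OF z, unfolded isCont_def] subset_UNIV]
    by (intro tendsto_intros)
  moreover have "\<forall>\<^sub>F w in at z within - cutset A. Ephi A w - Ephi A b1 = Re (phi A w)"
    by (simp add: eventually_at_filter Re_phi_eq_Ephi)
  ultimately have lim: "((\<lambda>w. Re (phi A w)) \<longlongrightarrow> Ephi A z - Ephi A b1) (at z within - cutset A)"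
    by (rule Lim_transform_eventually)
  have "z islimpt - cutset A"
    unfolding islimpt_approachable
  proof (intro allI impI)
    fix e :: real assume "0 < e"
    with True show "\<exists>w\<in>- cutset A. w \<noteq> z \<and> dist w z < e"
      by (intro bexI[of _ "z + \<i> * of_real (e / 2)"]) (auto simp: cutset_def dist_norm norm_mult)
  qed
  then have "at z within - cutset A \<noteq> bot"
    by (simp add: trivial_limit_within)
  with True lim show ?thesis
    by (simp add: RePhi_def tendsto_Lim)
qed

lemma has_derivative_RePhi:
  assumes "z \<in> slit A - {0}"
  shows "(RePhi A has_derivative (\<lambda>h. Re (h * (R_slit A z / (2 * z))))) (at z)"
proof (rule has_derivative_transform_within_open[OF _ _ assms])
  show "((\<lambda>w. Ephi A w - Ephi A b1) has_derivative (\<lambda>h. Re (h * (R_slit A z / (2 * z))))) (at z)"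
    using has_derivative_diff[OF has_derivative_Ephi has_derivative_const] assms by simp
  show "open (slit A - {0})"
    using open_slit by (simp add: open_delete)
qed (simp add: RePhi_eq_Ephi)

lemma harmonic_on_RePhi:
  assumes "open S" "S \<subseteq> slit A - {0}"
  shows "harmonic_on S (RePhi A)"
proof (rule harmonic_on_if_has_derivative_Re_holomorphic[OF assms(1)])
  show "(\<lambda>z. R_slit A z / (2 * z)) holomorphic_on S"
    using holomorphic_on_subset[OF holomorphic_R_slit] assms(2) by (intro holomorphic_intros) auto
qed (use assms(2) has_derivative_RePhi in blast)

lemma exp_RePhi_eq_norm:
  obtains P where "P holomorphic_on slit A" "\<And>z. z \<in> slit A \<Longrightarrow> P z \<noteq> 0"
    "\<And>z. z \<in> slit A - {0} \<Longrightarrow> norm (z * P z) = exp (- (2 / A) * RePhi A z)"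
proof -
  have "N1 A holomorphic_on slit A" "N2 A holomorphic_on slit A"
    unfolding N1_def[abs_def] N2_def[abs_def] by (intro holomorphic_intros holomorphic_R_slit)+
  moreover have "simply_connected (slit A)"
    by (rule starlike_imp_simply_connected[OF starlike_slit])
  ultimately obtain L where L: "L holomorphic_on slit A" and N1_exp: "\<And>z. z \<in> slit A \<Longrightarrow> N1 A z = exp (L z)"
    using N1_nonzero by (metis simply_connected_eq_holomorphic_log[OF open_slit])
  define c where "c = Ephi A b1"
  define P where "P z = exp (- R_slit A z / of_real A + of_real ((2 - A) / A) * L z + of_real (2 / A * c))
                          / N2 A z" for z
  show ?thesis
  proof
    show "P holomorphic_on slit A"
      unfolding P_def[abs_def] using L holomorphic_R_slit \<open>N2 A holomorphic_on slit A\<close> N2_nonzero A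
      by (intro holomorphic_intros) auto
    show "P z \<noteq> 0" if "z \<in> slit A" for z
      using N2_nonzero[OF that] by (simp add: P_def)
    show "norm (z * P z) = exp (- (2 / A) * RePhi A z)" if z: "z \<in> slit A - {0}" for z
    proof -
      have nonzero: "N1 A z \<noteq> 0" "N2 A z \<noteq> 0" "z \<noteq> 0"
        using N1_nonzero N2_nonzero z by auto
      define X where "X = - Re (R_slit A z) / A + (2 - A) / A * ln (norm (N1 A z)) + 2 / A * c"
      have "Re (L z) = ln (norm (N1 A z))"
        using N1_exp z by simp
      then have "norm (z * P z) = norm z * exp X / norm (N2 A z)"
        by (simp add: P_def X_def norm_mult norm_divide norm_exp_eq_Re)
      also have "\<dots> = exp (X - ln (norm (N2 A z)) + ln (norm z))"
        using nonzero by (simp add: exp_add exp_diff)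
      also have "X - ln (norm (N2 A z)) + ln (norm z) = - (2 / A) * (Ephi A z - c)"
        using A by (simp add: X_def Ephi_def field_simps)
      finally show ?thesis
        using RePhi_eq_Ephi z by (simp add: c_def)
    qed
  qed
qed

lemma bounded_RePhi_plus_ln_near_0:
  "\<exists>M. \<forall>\<^sub>F z in at 0. \<bar>(2 / A) * RePhi A z + ln (norm z)\<bar> \<le> M"
proof -
  obtain P where P: "P holomorphic_on slit A" "\<And>z. z \<in> slit A \<Longrightarrow> P z \<noteq> 0"
    and norm_eq: "\<And>z. z \<in> slit A - {0} \<Longrightarrow> norm (z * P z) = exp (- (2 / A) * RePhi A z)"
    using exp_RePhi_eq_norm by blast
  have "isCont P 0"
    using holomorphic_on_imp_continuous_on[OF P(1)] open_slit zero_in_slit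
    by (simp add: continuous_on_eq_continuous_at)
  then have "((\<lambda>z. ln (norm (P z))) \<longlongrightarrow> ln (norm (P 0))) (at 0)"
    using P(2)[OF zero_in_slit] by (intro tendsto_intros) (auto simp: isCont_def)
  then have "\<forall>\<^sub>F z in at 0. dist (ln (norm (P z))) (ln (norm (P 0))) < 1"
    by (rule tendstoD) simp
  moreover have "\<forall>\<^sub>F z in at 0. z \<in> slit A - {0}"
    using eventually_nhds_in_open[OF open_slit zero_in_slit]
    by (auto simp: eventually_at_filter elim: eventually_mono)
  ultimately have "\<forall>\<^sub>F z in at 0. \<bar>(2 / A) * RePhi A z + ln (norm z)\<bar> \<le> \<bar>ln (norm (P 0))\<bar> + 1"
  proof eventually_elim
    case (elim z)
    then have "ln (norm z * norm (P z)) = - (2 / A) * RePhi A z"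
      using norm_eq[of z] by (simp add: norm_mult)
    then have "ln (norm z) + ln (norm (P z)) = - (2 / A) * RePhi A z"
      using elim(2) P(2)[of z] by (simp add: ln_mult)
    with elim(1) show ?case
      by (simp add: dist_real_def)
  qed
  then show ?thesis
    by blast
qed

section \<open>The domain enclosed by \<open>\<Gamma>\<^sub>0\<close>\<close>

context
  fixes g :: "real \<Rightarrow> complex"
  assumes Gamma0: "is_Gamma0 A g"
begin

lemma Gamma0_simple_closed: "simple_path g" "pathfinish g = pathstart g"
  using Gamma0 by (auto simp: is_Gamma0_def)

lemma beta1_in_Gamma0: "of_real (beta1 A) \<in> path_image g"
  using Gamma0 pathstart_in_path_image[of g] by (auto simp: is_Gamma0_def)

lemma Gamma0_minus_beta1:
  assumes "z \<in> path_image g" "z \<noteq> of_real (beta1 A)"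
  shows "z \<in> slit A - {0}" "RePhi A z = 0"
  using Gamma0 assms by (auto simp: is_Gamma0_def mem_slit_iff)

lemma zero_notin_Gamma0: "0 \<notin> path_image g"
  using Gamma0_minus_beta1 beta1_pos by force

lemma inside_Gamma0_subset_slit: "inside (path_image g) \<subseteq> slit A"
proof
  fix z assume z: "z \<in> inside (path_image g)"
  show "z \<in> slit A"
  proof (rule ccontr)
    assume "z \<notin> slit A"
    then have z_real: "z = of_real (Re z)" "beta1 A \<le> Re z"
      by (auto simp: mem_slit_iff complex_eq_iff)
    have "Re z \<noteq> beta1 A"
      using z beta1_in_Gamma0 inside_no_overlap z_real(1) by fastforce
    define ray where "ray = complex_of_real ` {Re z..}"
    have "connected ray"
      unfolding ray_def by (intro connected_continuous_image continuous_intros) auto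
    moreover have "\<not> bounded ray"
    proof
      assume "bounded ray"
      then obtain B where "\<And>x. x \<in> ray \<Longrightarrow> norm x \<le> B"
        by (auto simp: bounded_iff)
      from this[of "of_real (max (Re z) (\<bar>B\<bar> + 1))"] show False
        by (auto simp: ray_def)
    qed
    moreover have "ray \<inter> path_image g = {}"
      using Gamma0_minus_beta1(1) \<open>Re z \<noteq> beta1 A\<close> z_real(2) by (fastforce simp: ray_def mem_slit_iff)
    moreover have "z \<in> ray"
      using z_real(1) by (auto simp: ray_def intro: image_eqI[of _ _ "Re z"])
    ultimately show False
      using connected_unbounded_disjoint_inside z by blast
  qed
qed

lemma inside_Gamma0:
  shows "open (inside (path_image g))" "connected (inside (path_image g))"
    "bounded (inside (path_image g))" "inside (path_image g) \<noteq> {}"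
    "frontier (inside (path_image g)) = path_image g" "simply_connected (inside (path_image g))"
  using Jordan_inside_outside[OF Gamma0_simple_closed]
    simply_connected_inside_simple_path[OF Gamma0_simple_closed(1)] by auto

lemma eventually_inside_Gamma0_in_slit:
  assumes "\<zeta> \<in> path_image g"
  shows "\<forall>\<^sub>F w in at \<zeta> within inside (path_image g). w \<in> slit A - {0}"
proof -
  have "\<forall>\<^sub>F w in at \<zeta> within inside (path_image g). w \<noteq> 0"
    using zero_notin_Gamma0 assms by (intro tendsto_imp_eventually_ne[OF tendsto_ident_at]) auto
  moreover have "\<forall>\<^sub>F w in at \<zeta> within inside (path_image g). w \<in> inside (path_image g)"
    by (simp add: eventually_at_filter)
  ultimately show ?thesis
    by eventually_elim (use inside_Gamma0_subset_slit in auto)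
qed

lemma tendsto_RePhi_Gamma0:
  assumes "\<zeta> \<in> path_image g"
  shows "((RePhi A) \<longlongrightarrow> 0) (at \<zeta> within inside (path_image g))"
proof -
  have cont: "isCont (Ephi A) \<zeta>"
    by (cases "\<zeta> = of_real (beta1 A)")
      (use isCont_Ephi_beta1 isCont_Ephi Gamma0_minus_beta1[OF assms] in auto)
  have "Ephi A \<zeta> - Ephi A (of_real (beta1 A)) = 0"
    by (cases "\<zeta> = of_real (beta1 A)") (use RePhi_eq_Ephi Gamma0_minus_beta1[OF assms] in auto)
  moreover have "((\<lambda>w. Ephi A w - Ephi A (of_real (beta1 A))) \<longlongrightarrow> Ephi A \<zeta> - Ephi A (of_real (beta1 A)))
      (at \<zeta> within inside (path_image g))"
    using tendsto_within_subset[OF cont[unfolded isCont_def] subset_UNIV] by (intro tendsto_intros)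
  ultimately have "((\<lambda>w. Ephi A w - Ephi A (of_real (beta1 A))) \<longlongrightarrow> 0) (at \<zeta> within inside (path_image g))"
    by simp
  moreover have "\<forall>\<^sub>F w in at \<zeta> within inside (path_image g). Ephi A w - Ephi A (of_real (beta1 A)) = RePhi A w"
    using eventually_inside_Gamma0_in_slit[OF assms] by eventually_elim (simp add: RePhi_eq_Ephi)
  ultimately show ?thesis
    by (rule Lim_transform_eventually)
qed

lemma frontier_norm_tendsto_1:
  assumes norm_eq: "\<And>z. z \<in> slit A - {0} \<Longrightarrow> norm (z * P z) = exp (- (2 / A) * RePhi A z)"
    and "\<zeta> \<in> frontier (inside (path_image g))"
  shows "((\<lambda>z. norm (z * P z)) \<longlongrightarrow> 1) (at \<zeta> within inside (path_image g))"
proof -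
  have \<zeta>: "\<zeta> \<in> path_image g"
    using assms(2) inside_Gamma0(5) by simp
  have "((\<lambda>z. exp (- (2 / A) * RePhi A z)) \<longlongrightarrow> exp (- (2 / A) * 0)) (at \<zeta> within inside (path_image g))"
    by (intro tendsto_intros tendsto_RePhi_Gamma0[OF \<zeta>])
  moreover have "\<forall>\<^sub>F z in at \<zeta> within inside (path_image g). exp (- (2 / A) * RePhi A z) = norm (z * P z)"
    using eventually_inside_Gamma0_in_slit[OF \<zeta>] by eventually_elim (simp add: norm_eq)
  ultimately show ?thesis
    using Lim_transform_eventually by fastforce
qed

lemma zero_in_inside_Gamma0: "0 \<in> inside (path_image g)"
proof (rule ccontr)
  assume not_in: "0 \<notin> inside (path_image g)"
  obtain P where P: "P holomorphic_on slit A" "\<And>z. z \<in> slit A \<Longrightarrow> P z \<noteq> 0"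
    and norm_eq: "\<And>z. z \<in> slit A - {0} \<Longrightarrow> norm (z * P z) = exp (- (2 / A) * RePhi A z)"
    using exp_RePhi_eq_norm by blast
  have F: "(\<lambda>z. z * P z) holomorphic_on slit A"
    using P(1) by (intro holomorphic_intros)
  then have F_inside: "(\<lambda>z. z * P z) holomorphic_on inside (path_image g)"
    using holomorphic_on_subset inside_Gamma0_subset_slit by blast
  have norm_1: "norm (z * P z) = 1" if "z \<in> inside (path_image g)" for z
  proof (rule holomorphic_norm_eq_1_if_frontier_tendsto_1[OF F_inside inside_Gamma0(1-3) _ _ that])
    show "z * P z \<noteq> 0" if "z \<in> inside (path_image g)" for z
      using that not_in P(2) inside_Gamma0_subset_slit by auto
  qed (rule frontier_norm_tendsto_1[OF norm_eq])
  obtain w where w: "w \<in> inside (path_image g)"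
    using inside_Gamma0(4) by blast
  have "(\<lambda>z. z * P z) constant_on inside (path_image g)"
    using norm_1 w by (intro maximum_modulus_principle[OF F_inside inside_Gamma0(1,2) inside_Gamma0(1) order_refl w]) auto
  then obtain c where c: "\<And>z. z \<in> inside (path_image g) \<Longrightarrow> z * P z = c"
    by (auto simp: constant_on_def)
  have "0 * P 0 = c"
    by (rule analytic_continuation_open[OF inside_Gamma0(1) open_slit inside_Gamma0(4)
          starlike_imp_connected[OF starlike_slit] inside_Gamma0_subset_slit F _ c zero_in_slit])
      simp
  with c[OF w] norm_1[OF w] show False
    by simp
qed

lemma Riemann_map_inside_Gamma0:
  obtains \<psi> where "\<psi> holomorphic_on ball 0 1" "inj_on \<psi> (ball 0 1)"
    "\<psi> ` ball 0 1 = inside (path_image g)" "\<psi> 0 = 0"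
    "\<And>u::complex. u \<in> ball 0 1 - {0} \<Longrightarrow> RePhi A (\<psi> u) = - (A / 2) * ln (norm u)"
proof -
  obtain P where P: "P holomorphic_on slit A" "\<And>z. z \<in> slit A \<Longrightarrow> P z \<noteq> 0"
    and norm_eq: "\<And>z. z \<in> slit A - {0} \<Longrightarrow> norm (z * P z) = exp (- (2 / A) * RePhi A z)"
    using exp_RePhi_eq_norm by blast
  obtain \<psi> where \<psi>: "\<psi> holomorphic_on ball 0 1" "inj_on \<psi> (ball 0 1)"
    "\<psi> ` ball 0 1 = inside (path_image g)" "\<psi> 0 = 0"
    and norm_\<psi>: "\<And>u. u \<in> ball 0 1 \<Longrightarrow> norm (\<psi> u * P (\<psi> u)) = norm u"
    using Riemann_map_normalizes_modulus[OF inside_Gamma0(1,3,6) zero_in_inside_Gamma0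
        holomorphic_on_subset[OF P(1) inside_Gamma0_subset_slit]]
      P(2) inside_Gamma0_subset_slit frontier_norm_tendsto_1[OF norm_eq] by blast
  show ?thesis
  proof (rule that[OF \<psi>])
    fix u :: complex assume u: "u \<in> ball 0 1 - {0}"
    then have "\<psi> u \<noteq> 0"
      using \<psi>(2,4) by (metis DiffE centre_in_ball inj_onD insertI1 zero_less_one)
    moreover have "\<psi> u \<in> slit A"
      using u \<psi>(3) inside_Gamma0_subset_slit by blast
    ultimately have "exp (- (2 / A) * RePhi A (\<psi> u)) = norm u"
      using norm_eq[of "\<psi> u"] norm_\<psi>[of u] u by auto
    then have "- (2 / A) * RePhi A (\<psi> u) = ln (norm u)"
      by (metis ln_exp)
    then show "RePhi A (\<psi> u) = - (A / 2) * ln (norm u)"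
      using A by (simp add: field_simps)
  qed
qed

lemma RePhi_pos_inside_Gamma0:
  assumes "z \<in> inside (path_image g) - {0}"
  shows "0 < RePhi A z"
proof -
  obtain \<psi> where \<psi>: "\<psi> holomorphic_on ball 0 1" "inj_on \<psi> (ball 0 1)"
    "\<psi> ` ball 0 1 = inside (path_image g)" "\<psi> 0 = 0"
    and RePhi_\<psi>: "\<And>u::complex. u \<in> ball 0 1 - {0} \<Longrightarrow> RePhi A (\<psi> u) = - (A / 2) * ln (norm u)"
    using Riemann_map_inside_Gamma0 by blast
  obtain u where u: "u \<in> ball 0 1" "z = \<psi> u"
    using assms \<psi>(3) by blast
  have "u \<noteq> 0"
    using assms u(2) \<psi>(4) by auto
  have "ln (norm u) < 0"
    using u(1) \<open>u \<noteq> 0\<close> by (intro ln_less_zero) auto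
  then have "0 < - (A / 2) * ln (norm u)"
    using A by (intro mult_neg_neg) auto
  then show ?thesis
    using RePhi_\<psi>[of u] u \<open>u \<noteq> 0\<close> by simp
qed

lemma level_curve_RePhi:
  assumes "0 < r"
  shows "\<exists>h. simple_path h \<and> pathfinish h = pathstart h
           \<and> path_image h = {z \<in> inside (path_image g) - {0}. RePhi A z = r / 2}
           \<and> 0 \<in> inside (path_image h)"
proof -
  obtain \<psi> where \<psi>: "\<psi> holomorphic_on ball 0 1" "inj_on \<psi> (ball 0 1)"
    "\<psi> ` ball 0 1 = inside (path_image g)" "\<psi> 0 = 0"
    and RePhi_\<psi>: "\<And>u::complex. u \<in> ball 0 1 - {0} \<Longrightarrow> RePhi A (\<psi> u) = - (A / 2) * ln (norm u)"
    using Riemann_map_inside_Gamma0 by blast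
  define \<rho> where "\<rho> = exp (- r / A)"
  have "0 < \<rho>" "\<rho> < 1"
    using A assms by (auto simp: \<rho>_def)
  then have "cball 0 \<rho> \<subseteq> ball (0::complex) 1"
    by auto
  then have cont: "continuous_on (cball 0 \<rho>) \<psi>" and inj: "inj_on \<psi> (cball 0 \<rho>)"
    using continuous_on_subset[OF holomorphic_on_imp_continuous_on[OF \<psi>(1)]] inj_on_subset[OF \<psi>(2)]
    by blast+
  have "{z \<in> inside (path_image g) - {0}. RePhi A z = r / 2} = \<psi> ` sphere 0 (exp (- (r / 2) / (A / 2)))"
    using A assms by (intro level_set_eq_image_sphere[OF \<psi>(2-4) RePhi_\<psi>]) auto
  also have "exp (- (r / 2) / (A / 2)) = \<rho>"
    by (simp add: \<rho>_def)
  finally have "path_image (\<psi> \<circ> circlepath 0 \<rho>) = {z \<in> inside (path_image g) - {0}. RePhi A z = r / 2}"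
    using simple_closed_curve_image_circlepath(3)[OF cont inj \<open>0 < \<rho>\<close>] by simp
  moreover have "\<psi> 0 \<in> \<psi> ` ball 0 \<rho>"
    using \<open>0 < \<rho>\<close> by simp
  then have "0 \<in> inside (path_image (\<psi> \<circ> circlepath 0 \<rho>))"
    using subsetD[OF image_ball_subset_inside_image_sphere[OF cont inj]] \<psi>(4)
    unfolding simple_closed_curve_image_circlepath(3)[OF cont inj \<open>0 < \<rho>\<close>] by simp
  ultimately show ?thesis
    using simple_closed_curve_image_circlepath(1,2)[OF cont inj \<open>0 < \<rho>\<close>]
    by (intro exI[of _ "\<psi> \<circ> circlepath 0 \<rho>"]) simp
qed

end

end

theorem mainTheorem2:
  fixes A :: real and g :: "real \<Rightarrow> complex"
  assumes "0 < A" "A < 1"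
    and "is_Gamma0 A g"
  shows "harmonic_on (inside (path_image g) - {0}) (RePhi A)
     \<and> (\<forall>\<zeta>\<in>path_image g. ((RePhi A) \<longlongrightarrow> 0) (at \<zeta> within inside (path_image g)))
     \<and> (\<exists>M. \<forall>\<^sub>F z in at 0. \<bar>(2 / A) * RePhi A z + ln (cmod z)\<bar> \<le> M)
     \<and> (\<forall>z\<in>inside (path_image g) - {0}. RePhi A z > 0)
     \<and> (\<forall>r>0. \<exists>h. simple_path h \<and> pathfinish h = pathstart h
            \<and> path_image h = {z \<in> inside (path_image g) - {0}. RePhi A z = r / 2}
            \<and> 0 \<in> inside (path_image h))"
proof (intro conjI ballI allI impI)
  show "harmonic_on (inside (path_image g) - {0}) (RePhi A)"
    using inside_Gamma0(1)[OF assms] inside_Gamma0_subset_slit[OF assms]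
    by (intro harmonic_on_RePhi[OF assms(1,2)]) (auto simp: open_delete)
next
  fix \<zeta> assume "\<zeta> \<in> path_image g"
  then show "((RePhi A) \<longlongrightarrow> 0) (at \<zeta> within inside (path_image g))"
    by (rule tendsto_RePhi_Gamma0[OF assms])
next
  show "\<exists>M. \<forall>\<^sub>F z in at 0. \<bar>(2 / A) * RePhi A z + ln (cmod z)\<bar> \<le> M"
    by (rule bounded_RePhi_plus_ln_near_0[OF assms(1,2)])
next
  fix z assume "z \<in> inside (path_image g) - {0}"
  then show "RePhi A z > 0"
    by (rule RePhi_pos_inside_Gamma0[OF assms])
next
  fix r :: real assume "0 < r"
  then show "\<exists>h. simple_path h \<and> pathfinish h = pathstart h
            \<and> path_image h = {z \<in> inside (path_image g) - {0}. RePhi A z = r / 2}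
            \<and> 0 \<in> inside (path_image h)"
    by (rule level_curve_RePhi[OF assms])
qed

end
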